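(* Let $b$ be a geodesic ray (from $\mathfrak o$) in a proper CAT(0) space $X$ and suppose there is a constant $M$ such that every $(32,0)$--quasi-geodesic segment with both end points on $b$ lies in $\mathcal N_\kappa(b,M)$. Then $b$ is $\kappa$--contracting with contracting constant $c_b=82000\,M$.
   Context: $\|x\|=d_X(\mathfrak o,x)$; $\kappa:[0,\infty)\to[1,\infty)$ is monotone increasing, concave and sublinear, $\kappa(x):=\kappa(\|x\|)$. $\mathcal N_\kappa(Z,n)=\{x: d_X(x,Z)\le n\kappa(x)\}$. A $(q,Q)$--quasi-geodesic is a continuous map from an interval with $\frac1q|s-t|-Q\le d(\beta(s),\beta(t))\le q|s-t|+Q$. A closed set $Z$ is $\kappa$--contracting with constant $c_Z$ if for all $x,y$ with $d_X(x,y)\le d_X(x,Z)$, $\operatorname{diam}(x_Z\cup y_Z)\le c_Z\kappa(x)$, where $x_Z$ is the set of nearest points of $Z$ to $x$. *)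

theory Defs
  imports "HOL-Analysis.Analysis"
begin

definition proper_metric :: "'a::metric_space itself \<Rightarrow> bool" where
  "proper_metric _ \<longleftrightarrow> (\<forall>(x::'a) r. compact (cball x r))"

definition geodesic_between :: "(real \<Rightarrow> 'a::metric_space) \<Rightarrow> 'a \<Rightarrow> 'a \<Rightarrow> bool" where
  "geodesic_between g x y \<longleftrightarrow> g 0 = x \<and> g (dist x y) = y \<and>
     (\<forall>s\<in>{0..dist x y}. \<forall>t\<in>{0..dist x y}. dist (g s) (g t) = \<bar>s - t\<bar>)"

definition geodesic_space :: "'a::metric_space itself \<Rightarrow> bool" where
  "geodesic_space _ \<longleftrightarrow> (\<forall>x y::'a. \<exists>g. geodesic_between g x y)"

text \<open>Pairs (point on a side of the geodesic triangle, corresponding point on the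
  comparison triangle xb yb zb in the Euclidean plane (here: complex numbers)).\<close>
definition comparison_pairs ::
  "(real \<Rightarrow> 'a::metric_space) \<Rightarrow> (real \<Rightarrow> 'a) \<Rightarrow> (real \<Rightarrow> 'a) \<Rightarrow> 'a \<Rightarrow> 'a \<Rightarrow> 'a
     \<Rightarrow> complex \<Rightarrow> complex \<Rightarrow> complex \<Rightarrow> ('a \<times> complex) set" where
  "comparison_pairs g1 g2 g3 x y z xb yb zb =
     {(g1 s, xb + (s / dist x y) *\<^sub>R (yb - xb)) | s. s \<in> {0..dist x y}} \<union>
     {(g2 s, yb + (s / dist y z) *\<^sub>R (zb - yb)) | s. s \<in> {0..dist y z}} \<union>
     {(g3 s, zb + (s / dist z x) *\<^sub>R (xb - zb)) | s. s \<in> {0..dist z x}}"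

definition CAT0 :: "'a::metric_space itself \<Rightarrow> bool" where
  "CAT0 T \<longleftrightarrow> geodesic_space T \<and>
     (\<forall>(x::'a) y z g1 g2 g3 (xb::complex) yb zb.
        geodesic_between g1 x y \<and> geodesic_between g2 y z \<and> geodesic_between g3 z x \<and>
        dist xb yb = dist x y \<and> dist yb zb = dist y z \<and> dist zb xb = dist z x \<longrightarrow>
        (\<forall>(p, pb)\<in>comparison_pairs g1 g2 g3 x y z xb yb zb.
           \<forall>(q, qb)\<in>comparison_pairs g1 g2 g3 x y z xb yb zb. dist p q \<le> dist pb qb))"

definition geodesic_ray :: "(real \<Rightarrow> 'a::metric_space) \<Rightarrow> 'a \<Rightarrow> bool" where
  "geodesic_ray b bp \<longleftrightarrow> b 0 = bp \<and> (\<forall>s\<ge>0. \<forall>t\<ge>0. dist (b s) (b t) = \<bar>s - t\<bar>)"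

definition sublinear_fn :: "(real \<Rightarrow> real) \<Rightarrow> bool" where
  "sublinear_fn \<kappa> \<longleftrightarrow> (\<forall>t\<ge>0. \<kappa> t \<ge> 1) \<and> mono_on {0..} \<kappa> \<and> concave_on {0..} \<kappa> \<and>
     ((\<lambda>t. \<kappa> t / t) \<longlongrightarrow> 0) at_top"

definition kappa_nbhd :: "(real \<Rightarrow> real) \<Rightarrow> 'a::metric_space \<Rightarrow> 'a set \<Rightarrow> real \<Rightarrow> 'a set" where
  "kappa_nbhd \<kappa> bp Z n = {x. infdist x Z \<le> n * \<kappa> (dist bp x)}"

definition quasi_geodesic_on :: "real \<Rightarrow> real \<Rightarrow> real set \<Rightarrow> (real \<Rightarrow> 'a::metric_space) \<Rightarrow> bool" where
  "quasi_geodesic_on q Q I \<beta> \<longleftrightarrow> is_interval I \<and> continuous_on I \<beta> \<and>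
     (\<forall>s\<in>I. \<forall>t\<in>I. \<bar>s - t\<bar> / q - Q \<le> dist (\<beta> s) (\<beta> t) \<and> dist (\<beta> s) (\<beta> t) \<le> q * \<bar>s - t\<bar> + Q)"

definition nearest_points :: "'a::metric_space \<Rightarrow> 'a set \<Rightarrow> 'a set" where
  "nearest_points x Z = {z \<in> Z. dist x z = infdist x Z}"

definition kappa_contracting :: "(real \<Rightarrow> real) \<Rightarrow> 'a::metric_space \<Rightarrow> 'a set \<Rightarrow> real \<Rightarrow> bool" where
  "kappa_contracting \<kappa> bp Z c \<longleftrightarrow> closed Z \<and>
     (\<forall>x y. dist x y \<le> infdist x Z \<longrightarrow>
        diameter (nearest_points x Z \<union> nearest_points y Z) \<le> c * \<kappa> (dist bp x))"

end

theory Submission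
  imports Defs
begin

text \<open>Let \<open>p\<close>, \<open>q\<close> be the (unique) nearest points of the ray to \<open>x\<close>, \<open>y\<close>. In a CAT(0) space
  nearest-point projection to a geodesic creates an angle of at least \<open>\<pi>/2\<close>, so Pythagoras holds
  as an inequality. Given a point \<open>w\<close> projecting to \<open>p\<close>, let \<open>x'\<close> be the foot of \<open>p\<close> on
  \<open>[w,q]\<close>: the concatenation \<open>[p,x'] \<cdot> [x',q]\<close> has a right angle at \<open>x'\<close> and is a
  \<open>(2,0)\<close>-quasi-geodesic, so by hypothesis \<open>x'\<close> lies within \<open>M\<kappa>(x')\<close> of the ray, whereas the right
  angles at \<open>p\<close> and \<open>x'\<close> give \<open>d(p,x')\<^sup>2 \<le> 3 d(w,p) d(x',b)\<close>. Since \<open>d(p,x')\<close> is at least the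
  Gromov product \<open>(w|q)\<^sub>p\<close>, choosing \<open>w\<close> with \<open>d(w,p) \<le> d(p,q)\<close> and \<open>(w|q)\<^sub>p \<ge> d(p,q)/32\<close>
  yields \<open>d(p,q) \<le> 3072 M \<kappa>(x')\<close>. The CN inequality shows that such a \<open>w\<close> can be found on
  \<open>[p,x]\<close> or on \<open>[q,y]\<close>, and concavity of \<open>\<kappa>\<close> compares \<open>\<kappa>(x')\<close> with \<open>\<kappa>(x)\<close>.\<close>

lemma le_of_forall_unit_le_add_mult:
  fixes x y d :: real
  assumes "0 \<le> d" and "\<And>l. 0 < l \<Longrightarrow> l \<le> 1 \<Longrightarrow> x \<le> y + l * d"
  shows "x \<le> y"
proof (rule field_le_epsilon)
  fix e :: real assume "0 < e"
  define l where "l = min 1 (e / (d + 1))"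
  have l: "0 < l" "l \<le> 1" using \<open>0 < e\<close> assms(1) by (auto simp: l_def)
  have "l * d \<le> e / (d + 1) * d" using assms(1) by (intro mult_right_mono) (auto simp: l_def)
  also have "\<dots> \<le> e" using \<open>0 < e\<close> assms(1) by (simp add: field_simps)
  finally show "x \<le> y + e" using assms(2)[OF l] by linarith
qed

lemma sublinear_fn_le_scale:
  assumes "sublinear_fn \<kappa>" and "1 \<le> c" "0 \<le> r" "0 \<le> r'" "r' \<le> c * r"
  shows "\<kappa> r' \<le> c * \<kappa> r"
proof -
  have mono: "mono_on {0..} \<kappa>" and conc: "concave_on {0..} \<kappa>" and "1 \<le> \<kappa> 0"
    using assms(1) by (auto simp: sublinear_fn_def)
  have "\<kappa> r' \<le> \<kappa> (c * r)" using mono_onD[OF mono] assms(2-5) by auto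
  moreover have "(1 - 1/c) * \<kappa> 0 + (1/c) * \<kappa> (c * r) \<le> \<kappa> ((1 - 1/c) *\<^sub>R 0 + (1/c) *\<^sub>R (c * r))"
    using assms(2,3) by (intro concave_onD[OF conc]) auto
  moreover have "(1 - 1/c) *\<^sub>R 0 + (1/c) *\<^sub>R (c * r) = r" using assms(2) by simp
  moreover have "0 \<le> (1 - 1/c) * \<kappa> 0" using assms(2) \<open>1 \<le> \<kappa> 0\<close> by simp
  ultimately have "\<kappa> (c * r) / c \<le> \<kappa> r" by simp
  with \<open>\<kappa> r' \<le> \<kappa> (c * r)\<close> show ?thesis using assms(2) by (simp add: divide_le_eq mult.commute)
qed

lemma diameter_le_dist_bound:
  fixes S :: "'a::metric_space set"
  assumes "0 \<le> d" and "\<And>x y. x \<in> S \<Longrightarrow> y \<in> S \<Longrightarrow> dist x y \<le> d"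
  shows "diameter S \<le> d"
  using assms by (auto simp: diameter_def intro: cSUP_least)

lemma le_mult_infdist:
  assumes "A \<noteq> {}" "0 \<le> c" and le: "\<And>z. z \<in> A \<Longrightarrow> a \<le> c * dist x z"
  shows "a \<le> c * infdist x A"
proof (cases "c = 0")
  case True
  then show ?thesis using assms(1) le by auto
next
  case False
  then have "a / c \<le> infdist x A"
    unfolding infdist_notempty[OF assms(1)] using assms(2) le
    by (intro cINF_greatest[OF assms(1)]) (simp add: divide_le_eq mult.commute)
  then show ?thesis using False assms(2) by (simp add: divide_le_eq mult.commute)
qed

lemma sq_dist_le_of_obtuse_angles:
  fixes w p x z :: "'a::metric_space"
  assumes px: "(dist p x)\<^sup>2 + (dist w x)\<^sup>2 \<le> (dist w p)\<^sup>2"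
    and pz: "(dist w p)\<^sup>2 + (dist p z)\<^sup>2 \<le> (dist w z)\<^sup>2"
  shows "(dist p x)\<^sup>2 \<le> 3 * dist w p * dist x z"
proof -
  define \<rho> h s \<epsilon> where "\<rho> = dist p x" and "h = dist w p" and "s = dist w x" and "\<epsilon> = dist x z"
  have nonneg: "0 \<le> \<rho>" "0 \<le> s" "0 \<le> \<epsilon>" by (simp_all add: \<rho>_def s_def \<epsilon>_def)
  have "\<rho>\<^sup>2 \<le> h\<^sup>2" "s\<^sup>2 \<le> h\<^sup>2"
    using px zero_le_power2[of \<rho>] zero_le_power2[of s] unfolding \<rho>_def s_def h_def by linarith+
  then have "\<rho> \<le> h" "s \<le> h" using nonneg by (auto simp: h_def intro: power2_le_imp_le)
  show ?thesis
  proof (cases "\<rho> \<le> \<epsilon>")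
    case True
    have "\<rho> * \<rho> \<le> 3 * h * \<epsilon>"
      using \<open>\<rho> \<le> h\<close> True nonneg by (intro mult_mono) auto
    then show ?thesis by (simp add: \<rho>_def h_def \<epsilon>_def power2_eq_square)
  next
    case False
    have "(\<rho> - \<epsilon>)\<^sup>2 \<le> (dist p z)\<^sup>2"
      using dist_triangle[of p x z] False by (intro power_mono) (auto simp: \<rho>_def \<epsilon>_def dist_commute)
    moreover have "(dist w z)\<^sup>2 \<le> (s + \<epsilon>)\<^sup>2"
      using dist_triangle[of w z x] by (intro power_mono) (auto simp: s_def \<epsilon>_def dist_commute)
    moreover have "(\<rho> - \<epsilon>)\<^sup>2 = \<rho>\<^sup>2 - 2 * \<rho> * \<epsilon> + \<epsilon>\<^sup>2" "(s + \<epsilon>)\<^sup>2 = s\<^sup>2 + 2 * s * \<epsilon> + \<epsilon>\<^sup>2"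
      by (simp_all add: power2_eq_square algebra_simps)
    ultimately have "\<rho>\<^sup>2 \<le> \<rho> * \<epsilon> + s * \<epsilon>"
      using px pz unfolding \<rho>_def s_def h_def by linarith
    also have "\<dots> \<le> h * \<epsilon> + h * \<epsilon>"
      using \<open>s \<le> h\<close> \<open>\<rho> \<le> h\<close> nonneg by (intro add_mono mult_right_mono) auto
    also have "\<dots> \<le> 3 * h * \<epsilon>" using nonneg \<open>s \<le> h\<close> by simp
    finally show ?thesis by (simp add: \<rho>_def h_def \<epsilon>_def)
  qed
qed

lemma quasi_geodesic_on_mono:
  assumes "quasi_geodesic_on q Q I \<beta>" and "0 < q" "q \<le> q'" "Q \<le> Q'"
  shows "quasi_geodesic_on q' Q' I \<beta>"
  unfolding quasi_geodesic_on_def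
proof (intro conjI ballI)
  show "is_interval I" "continuous_on I \<beta>" using assms(1) by (auto simp: quasi_geodesic_on_def)
  fix s t assume st: "s \<in> I" "t \<in> I"
  have "\<bar>s - t\<bar> / q' \<le> \<bar>s - t\<bar> / q" using assms(2,3) by (intro divide_left_mono) auto
  moreover have "q * \<bar>s - t\<bar> \<le> q' * \<bar>s - t\<bar>" using assms(3) by (intro mult_right_mono) auto
  ultimately show "\<bar>s - t\<bar> / q' - Q' \<le> dist (\<beta> s) (\<beta> t)" "dist (\<beta> s) (\<beta> t) \<le> q' * \<bar>s - t\<bar> + Q'"
    using assms(1,4) st unfolding quasi_geodesic_on_def by fastforce+
qed

lemma continuous_on_isometric:
  assumes "\<forall>s\<in>I. \<forall>t\<in>I. dist (f s) (f t) = \<bar>s - t\<bar>"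
  shows "continuous_on I f"
  using assms by (intro lipschitz_on_continuous_on[where L=1]) (auto simp: lipschitz_on_def dist_real_def)

lemma geodesic_between_isometric:
  "geodesic_between g x y \<Longrightarrow> \<forall>s\<in>{0..dist x y}. \<forall>t\<in>{0..dist x y}. dist (g s) (g t) = \<bar>s - t\<bar>"
  by (simp add: geodesic_between_def)

lemma nearest_pointsD:
  assumes "p \<in> nearest_points x Z"
  shows "p \<in> Z" "dist x p = infdist x Z" "\<forall>z\<in>Z. dist x p \<le> dist x z"
  using assms by (auto simp: nearest_points_def infdist_le)

lemma nearest_point_of_point_between:
  assumes near: "\<forall>z\<in>Z. dist u p \<le> dist u z" and between: "dist u v + dist v p = dist u p"
  shows "\<forall>z\<in>Z. dist v p \<le> dist v z"
proof
  fix z assume "z \<in> Z"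
  then have "dist u p \<le> dist u z" using near by blast
  then show "dist v p \<le> dist v z" using between dist_triangle[of u z v] by linarith
qed

lemma geodesic_foot_exists:
  assumes "geodesic_between g x y"
  obtains s0 where "s0 \<in> {0..dist x y}" "\<forall>s\<in>{0..dist x y}. dist p (g s0) \<le> dist p (g s)"
proof -
  have "continuous_on {0..dist x y} (\<lambda>s. dist p (g s))"
    using continuous_on_isometric[OF geodesic_between_isometric[OF assms]] by (intro continuous_intros)
  then obtain s0 where "s0 \<in> {0..dist x y}" "\<forall>s\<in>{0..dist x y}. dist p (g s0) \<le> dist p (g s)"
    using continuous_attains_inf[of "{0..dist x y}" "\<lambda>s. dist p (g s)"] by auto
  then show ?thesis by (rule that)
qed

lemma CAT0_geodesic_exists:
  fixes x y :: "'a::metric_space"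
  assumes "CAT0 TYPE('a)"
  obtains g where "geodesic_between g x y"
proof -
  have "\<forall>x y::'a. \<exists>g. geodesic_between g x y" using assms by (simp add: CAT0_def geodesic_space_def)
  then show ?thesis using that by blast
qed

lemma CAT0_comparison:
  fixes x y z :: "'a::metric_space"
  assumes "CAT0 TYPE('a)"
    and "geodesic_between g1 x y" "geodesic_between g2 y z" "geodesic_between g3 z x"
    and "dist xb yb = dist x y" "dist yb zb = dist y z" "dist zb xb = dist z x"
    and "(p, pb) \<in> comparison_pairs g1 g2 g3 x y z xb yb zb"
    and "(q, qb) \<in> comparison_pairs g1 g2 g3 x y z xb yb zb"
  shows "dist p q \<le> dist pb qb"
proof -
  have "\<forall>(p, pb)\<in>comparison_pairs g1 g2 g3 x y z xb yb zb.
          \<forall>(q, qb)\<in>comparison_pairs g1 g2 g3 x y z xb yb zb. dist p q \<le> dist pb qb"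
    using assms(1-7) unfolding CAT0_def by (elim conjE allE impE) (intro conjI; assumption)+
  then show ?thesis using assms(8,9) by fast
qed

lemma CAT0_dist_from_vertex_le:
  fixes z :: "'a::metric_space" and xb yb zb :: complex
  assumes cat: "CAT0 TYPE('a)" and g: "geodesic_between g a c" and s: "s \<in> {0..dist a c}"
    and sides: "dist xb yb = dist a c" "dist yb zb = dist c z" "dist zb xb = dist z a"
  shows "dist (g s) z \<le> dist (xb + (s / dist a c) *\<^sub>R (yb - xb)) zb"
proof -
  obtain g2 g3 where g2: "geodesic_between g2 c z" and g3: "geodesic_between g3 z a"
    using CAT0_geodesic_exists[OF cat] by metis
  let ?P = "comparison_pairs g g2 g3 a c z xb yb zb"
  have "(g s, xb + (s / dist a c) *\<^sub>R (yb - xb)) \<in> ?P"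
    using s unfolding comparison_pairs_def by (intro UnI1) auto
  moreover have "(z, zb + (0 / dist z a) *\<^sub>R (xb - zb)) \<in> ?P"
    using g3 unfolding comparison_pairs_def geodesic_between_def by force
  then have "(z, zb) \<in> ?P" by simp
  ultimately show ?thesis by (rule CAT0_comparison[OF cat g g2 g3 sides])
qed

lemma euclidean_triangle_exists:
  fixes A B d :: real
  assumes "0 < d" "0 \<le> A" "B \<le> A + d" "A \<le> B + d" "d \<le> A + B"
  obtains \<alpha> \<beta> where "\<alpha>\<^sup>2 + \<beta>\<^sup>2 = A\<^sup>2" "(d - \<alpha>)\<^sup>2 + \<beta>\<^sup>2 = B\<^sup>2"
proof -
  define \<alpha> where "\<alpha> = (d\<^sup>2 + A\<^sup>2 - B\<^sup>2) / (2 * d)"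
  have "\<bar>d\<^sup>2 + A\<^sup>2 - B\<^sup>2\<bar> \<le> 2 * d * A"
  proof -
    have "(d - A)\<^sup>2 \<le> B\<^sup>2" using assms by (intro power2_le_iff_abs_le[THEN iffD2]) auto
    moreover have "B\<^sup>2 \<le> (d + A)\<^sup>2" using assms by (intro power_mono) auto
    ultimately show ?thesis by (auto simp: power2_eq_square algebra_simps abs_le_iff)
  qed
  then have "\<bar>\<alpha>\<bar> \<le> A" using assms(1) by (simp add: \<alpha>_def abs_div pos_divide_le_eq mult.commute)
  then have "\<alpha>\<^sup>2 \<le> A\<^sup>2" by (metis abs_le_square_iff abs_of_nonneg assms(2))
  then have "\<alpha>\<^sup>2 + (sqrt (A\<^sup>2 - \<alpha>\<^sup>2))\<^sup>2 = A\<^sup>2" by simp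
  moreover have "(d - \<alpha>)\<^sup>2 + (sqrt (A\<^sup>2 - \<alpha>\<^sup>2))\<^sup>2 = B\<^sup>2"
    using \<open>\<alpha>\<^sup>2 \<le> A\<^sup>2\<close> assms(1) by (simp add: \<alpha>_def field_simps power2_eq_square)
  ultimately show ?thesis by (rule that)
qed

text \<open>The CN inequality of Bruhat and Tits, read off from a comparison triangle with vertices
  \<open>0\<close>, \<open>d\<close> and \<open>\<alpha> + i\<beta>\<close> in the complex plane.\<close>
lemma CAT0_CN_inequality:
  fixes z :: "'a::metric_space"
  assumes cat: "CAT0 TYPE('a)" and g: "geodesic_between g a c" and s: "0 \<le> s" "s \<le> dist a c"
  shows "(dist z (g s))\<^sup>2 \<le> (1 - s/dist a c) * (dist z a)\<^sup>2 + (s/dist a c) * (dist z c)\<^sup>2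
           - (s/dist a c) * (1 - s/dist a c) * (dist a c)\<^sup>2"
proof (cases "dist a c = 0")
  case True
  then show ?thesis using g s by (simp add: geodesic_between_def)
next
  case False
  define d where "d = dist a c"
  have "0 < d" using False by (simp add: d_def)
  obtain \<alpha> \<beta> where A: "\<alpha>\<^sup>2 + \<beta>\<^sup>2 = (dist z a)\<^sup>2" and B: "(d - \<alpha>)\<^sup>2 + \<beta>\<^sup>2 = (dist z c)\<^sup>2"
    using euclidean_triangle_exists[OF \<open>0 < d\<close>, of "dist z a" "dist z c"]
      dist_triangle[of z c a] dist_triangle[of z a c] dist_triangle[of a c z]
    by (auto simp: d_def dist_commute)
  have dist_Complex: "dist (Complex u v) (complex_of_real r) = sqrt ((u - r)\<^sup>2 + v\<^sup>2)" for u v r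
    by (simp add: dist_norm cmod_def complex_of_real_def)
  have "dist (complex_of_real d) (Complex \<alpha> \<beta>) = sqrt ((d - \<alpha>)\<^sup>2 + \<beta>\<^sup>2)"
    by (simp add: dist_commute[of "complex_of_real d"] dist_Complex power2_commute)
  then have "dist (complex_of_real d) (Complex \<alpha> \<beta>) = dist c z"
    using B by (simp add: dist_commute)
  moreover have "dist (Complex \<alpha> \<beta>) 0 = dist z a"
    using A dist_Complex[of \<alpha> \<beta> 0] by simp
  ultimately have "dist (g s) z \<le> dist (0 + (s / d) *\<^sub>R (complex_of_real d - 0)) (Complex \<alpha> \<beta>)"
    using CAT0_dist_from_vertex_le[OF cat g, of s 0 "complex_of_real d" "Complex \<alpha> \<beta>" z] s \<open>0 < d\<close>
    by (simp add: d_def)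
  also have "\<dots> = sqrt ((s - \<alpha>)\<^sup>2 + \<beta>\<^sup>2)"
    using \<open>0 < d\<close> by (simp add: dist_commute[of _ "Complex \<alpha> \<beta>"] dist_Complex scaleR_conv_of_real power2_commute)
  finally have "(dist z (g s))\<^sup>2 \<le> (sqrt ((s - \<alpha>)\<^sup>2 + \<beta>\<^sup>2))\<^sup>2"
    by (intro power_mono) (auto simp: dist_commute)
  also have "\<dots> = (s - \<alpha>)\<^sup>2 + \<beta>\<^sup>2" by simp
  also have "\<dots> = (1 - s/d) * (dist z a)\<^sup>2 + (s/d) * (dist z c)\<^sup>2 - (s/d) * (1 - s/d) * d\<^sup>2"
    using \<open>0 < d\<close> unfolding A[symmetric] B[symmetric] by (simp add: field_simps power2_eq_square)
  finally show ?thesis by (simp add: d_def)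
qed

lemma CAT0_dist_geodesic_le_max:
  fixes z :: "'a::metric_space"
  assumes cat: "CAT0 TYPE('a)" and g: "geodesic_between g a c" and s: "0 \<le> s" "s \<le> dist a c"
  shows "dist z (g s) \<le> max (dist z a) (dist z c)"
proof -
  define t m where "t = s / dist a c" and "m = max (dist z a) (dist z c)"
  have t: "0 \<le> t" "t \<le> 1" using s by (auto simp: t_def divide_le_eq_1)
  have "(dist z a)\<^sup>2 \<le> m\<^sup>2" "(dist z c)\<^sup>2 \<le> m\<^sup>2" by (auto simp: m_def intro: power_mono)
  then have "(1 - t) * (dist z a)\<^sup>2 \<le> (1 - t) * m\<^sup>2" "t * (dist z c)\<^sup>2 \<le> t * m\<^sup>2"
    using t by (auto intro: mult_left_mono)
  moreover have "0 \<le> t * (1 - t) * (dist a c)\<^sup>2" using t by simp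
  moreover have "(dist z (g s))\<^sup>2 \<le> (1 - t) * (dist z a)\<^sup>2 + t * (dist z c)\<^sup>2 - t * (1 - t) * (dist a c)\<^sup>2"
    using CAT0_CN_inequality[OF cat g s] by (simp add: t_def)
  ultimately have "(dist z (g s))\<^sup>2 \<le> m\<^sup>2" by (simp add: algebra_simps)
  then have "dist z (g s) \<le> m" by (rule power2_le_imp_le) (simp add: m_def le_max_iff_disj)
  then show ?thesis by (simp add: m_def)
qed

lemma geodesic_between_isometric_segment:
  assumes iso: "\<forall>s\<in>I. \<forall>t\<in>I. dist (f s) (f t) = \<bar>s - t\<bar>" and seg: "{min r0 r1..max r0 r1} \<subseteq> I"
  shows "geodesic_between (\<lambda>s. f (if r0 \<le> r1 then r0 + s else r0 - s)) (f r0) (f r1)"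
proof -
  let ?\<phi> = "\<lambda>s. if r0 \<le> r1 then r0 + s else r0 - s"
  have "r0 \<in> I" "r1 \<in> I" using seg by auto
  then have d: "dist (f r0) (f r1) = \<bar>r1 - r0\<bar>" using iso by (simp add: abs_minus_commute)
  have in_I: "?\<phi> s \<in> I" if "s \<in> {0..\<bar>r1 - r0\<bar>}" for s
    using that seg by (auto simp: subset_iff)
  have "dist (f (?\<phi> s)) (f (?\<phi> t)) = \<bar>s - t\<bar>" if "s \<in> {0..\<bar>r1 - r0\<bar>}" "t \<in> {0..\<bar>r1 - r0\<bar>}" for s t
    using iso in_I[OF that(1)] in_I[OF that(2)] by (auto simp: abs_minus_commute)
  then show ?thesis unfolding geodesic_between_def d by auto
qed

text \<open>Apply the CN inequality at the point a fraction \<open>l\<close> of the way from the foot and let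
  \<open>l \<rightarrow> 0\<close>.\<close>
lemma CAT0_foot_right_angle:
  fixes f :: "real \<Rightarrow> 'a::metric_space"
  assumes cat: "CAT0 TYPE('a)"
    and iso: "\<forall>s\<in>I. \<forall>t\<in>I. dist (f s) (f t) = \<bar>s - t\<bar>"
    and seg: "{min r0 r1..max r0 r1} \<subseteq> I"
    and foot: "\<forall>r\<in>I. dist u (f r0) \<le> dist u (f r)"
  shows "(dist u (f r0))\<^sup>2 + (r1 - r0)\<^sup>2 \<le> (dist u (f r1))\<^sup>2"
proof (cases "r0 = r1")
  case True
  then show ?thesis by simp
next
  case False
  define g where "g = (\<lambda>s. f (if r0 \<le> r1 then r0 + s else r0 - s))"
  define \<delta> where "\<delta> = \<bar>r1 - r0\<bar>"
  have "0 < \<delta>" using False by (simp add: \<delta>_def)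
  have geo: "geodesic_between g (f r0) (f r1)"
    unfolding g_def by (rule geodesic_between_isometric_segment[OF iso seg])
  have "r0 \<in> I" "r1 \<in> I" using seg by auto
  then have dd: "dist (f r0) (f r1) = \<delta>" using iso by (simp add: \<delta>_def abs_minus_commute)
  have approx: "(dist u (f r0))\<^sup>2 + \<delta>\<^sup>2 \<le> (dist u (f r1))\<^sup>2 + l * \<delta>\<^sup>2" if l: "0 < l" "l \<le> 1" for l
  proof -
    have s: "0 \<le> l * \<delta>" "l * \<delta> \<le> \<delta>" using l \<open>0 < \<delta>\<close> by auto
    have in_I: "(if r0 \<le> r1 then r0 + t else r0 - t) \<in> I" if "0 \<le> t" "t \<le> \<delta>" for t
      using seg that by (auto simp: \<delta>_def subset_iff)
    have "dist u (f r0) \<le> dist u (g (l * \<delta>))" unfolding g_def using foot in_I[OF s] by blast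
    then have "(dist u (f r0))\<^sup>2 \<le> (dist u (g (l * \<delta>)))\<^sup>2" by (intro power_mono) auto
    also have "\<dots> \<le> (1 - l) * (dist u (f r0))\<^sup>2 + l * (dist u (f r1))\<^sup>2 - l * (1 - l) * \<delta>\<^sup>2"
      using CAT0_CN_inequality[OF cat geo, of "l * \<delta>" u] s \<open>0 < \<delta>\<close> by (simp add: dd)
    finally have "l * ((dist u (f r0))\<^sup>2 + \<delta>\<^sup>2) \<le> l * ((dist u (f r1))\<^sup>2 + l * \<delta>\<^sup>2)"
      by (simp add: algebra_simps)
    then show ?thesis using l by simp
  qed
  have "(dist u (f r0))\<^sup>2 + \<delta>\<^sup>2 \<le> (dist u (f r1))\<^sup>2"
    by (rule le_of_forall_unit_le_add_mult[OF zero_le_power2 approx])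
  then show ?thesis by (simp add: \<delta>_def)
qed

context
  fixes c G :: "real \<Rightarrow> 'a::metric_space" and A l s0 :: real
  assumes iso_c: "\<forall>s\<in>{0..A}. \<forall>t\<in>{0..A}. dist (c s) (c t) = \<bar>s - t\<bar>"
    and iso_G: "\<forall>s\<in>{0..l}. \<forall>t\<in>{0..l}. dist (G s) (G t) = \<bar>s - t\<bar>"
    and A: "0 \<le> A" and s0: "0 \<le> s0" "s0 \<le> l" and join: "c A = G s0"
    and angle: "\<And>\<sigma> s1. 0 \<le> \<sigma> \<Longrightarrow> \<sigma> \<le> A \<Longrightarrow> s0 \<le> s1 \<Longrightarrow> s1 \<le> l \<Longrightarrow>
                  (A - \<sigma>)\<^sup>2 + (s1 - s0)\<^sup>2 \<le> (dist (c \<sigma>) (G s1))\<^sup>2"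
begin

lemma concat_right_angle_dist_bounds:
  defines "\<beta> \<equiv> \<lambda>\<sigma>. if \<sigma> \<le> A then c \<sigma> else G (s0 + (\<sigma> - A))"
  assumes st: "0 \<le> \<sigma>" "\<sigma> \<le> \<tau>" "\<tau> \<le> A + (l - s0)"
  shows "(\<tau> - \<sigma>) / 2 \<le> dist (\<beta> \<sigma>) (\<beta> \<tau>) \<and> dist (\<beta> \<sigma>) (\<beta> \<tau>) \<le> \<tau> - \<sigma>"
proof -
  have \<beta>_G: "\<beta> r = G (s0 + (r - A))" if "A \<le> r" for r
    using that join by (cases "r = A") (auto simp: \<beta>_def)
  consider "\<tau> \<le> A" | "A \<le> \<sigma>" | "\<sigma> < A" "A < \<tau>" by linarith
  then show ?thesis
  proof cases
    case 1
    then show ?thesis using st iso_c by (simp add: \<beta>_def)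
  next
    case 2
    then show ?thesis using st s0 iso_G by (simp add: \<beta>_G)
  next
    case 3
    define s1 where "s1 = s0 + (\<tau> - A)"
    have s1: "s0 \<le> s1" "s1 \<le> l" using 3 st by (auto simp: s1_def)
    have \<beta>: "\<beta> \<sigma> = c \<sigma>" "\<beta> \<tau> = G s1" using 3 by (auto simp: \<beta>_def s1_def)
    have "dist (c \<sigma>) (G s0) = A - \<sigma>" using iso_c st 3 A join[symmetric] by auto
    moreover have "dist (G s0) (G s1) = \<tau> - A" using iso_G s0 s1 by (simp add: s1_def)
    ultimately have up: "dist (c \<sigma>) (G s1) \<le> \<tau> - \<sigma>"
      using dist_triangle[of "c \<sigma>" "G s1" "G s0"] by simp
    have "((\<tau> - \<sigma>) / 2)\<^sup>2 \<le> ((A - \<sigma>)\<^sup>2 + (s1 - s0)\<^sup>2) / 2"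
      using zero_le_power2[of "(A - \<sigma>) - (\<tau> - A)"]
      by (simp add: s1_def power2_eq_square field_simps)
    also have "\<dots> \<le> (A - \<sigma>)\<^sup>2 + (s1 - s0)\<^sup>2" by simp
    also have "\<dots> \<le> (dist (c \<sigma>) (G s1))\<^sup>2" using angle st 3 s1 by simp
    finally have "(\<tau> - \<sigma>) / 2 \<le> dist (c \<sigma>) (G s1)" by (rule power2_le_imp_le) simp
    then show ?thesis using up by (simp add: \<beta>)
  qed
qed

lemma quasi_geodesic_concat_right_angle:
  "quasi_geodesic_on 2 0 {0..A + (l - s0)} (\<lambda>\<sigma>. if \<sigma> \<le> A then c \<sigma> else G (s0 + (\<sigma> - A)))"
  (is "quasi_geodesic_on 2 0 {0..?T} ?\<beta>")
  unfolding quasi_geodesic_on_def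
proof (intro conjI ballI)
  show "is_interval {0..?T}" by (rule is_interval_cc)
  show "continuous_on {0..?T} ?\<beta>"
  proof (rule continuous_on_cases_le[where h = "\<lambda>\<sigma>. \<sigma>" and a = A])
    show "continuous_on {\<sigma> \<in> {0..?T}. \<sigma> \<le> A} c"
      using continuous_on_isometric[OF iso_c] by (rule continuous_on_subset) auto
    show "continuous_on {\<sigma> \<in> {0..?T}. A \<le> \<sigma>} (\<lambda>\<sigma>. G (s0 + (\<sigma> - A)))"
    proof (rule continuous_on_compose2[OF continuous_on_isometric[OF iso_G]])
      show "continuous_on {\<sigma> \<in> {0..?T}. A \<le> \<sigma>} (\<lambda>\<sigma>. s0 + (\<sigma> - A))"
        by (intro continuous_intros)
      show "(\<lambda>\<sigma>. s0 + (\<sigma> - A)) ` {\<sigma> \<in> {0..?T}. A \<le> \<sigma>} \<subseteq> {0..l}" using s0 by auto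
    qed
    show "continuous_on {0..?T} (\<lambda>\<sigma>. \<sigma>)" by (rule continuous_on_id)
    show "c \<sigma> = G (s0 + (\<sigma> - A))" if "\<sigma> = A" for \<sigma> using that join by simp
  qed
  fix \<sigma> \<tau> assume "\<sigma> \<in> {0..?T}" "\<tau> \<in> {0..?T}"
  then have "\<bar>\<sigma> - \<tau>\<bar> / 2 \<le> dist (?\<beta> \<sigma>) (?\<beta> \<tau>) \<and> dist (?\<beta> \<sigma>) (?\<beta> \<tau>) \<le> \<bar>\<sigma> - \<tau>\<bar>"
    using concat_right_angle_dist_bounds[of \<sigma> \<tau>] concat_right_angle_dist_bounds[of \<tau> \<sigma>]
    by (cases "\<sigma> \<le> \<tau>") (auto simp: dist_commute)
  then show "\<bar>\<sigma> - \<tau>\<bar> / 2 - 0 \<le> dist (?\<beta> \<sigma>) (?\<beta> \<tau>)" "dist (?\<beta> \<sigma>) (?\<beta> \<tau>) \<le> 2 * \<bar>\<sigma> - \<tau>\<bar> + 0"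
    by auto
qed

end

text \<open>The path is \<open>[p, G s0]\<close> followed by \<open>G\<close> from \<open>G s0\<close> to \<open>q\<close>; the foot of every point of
  \<open>[p, G s0]\<close> on \<open>G\<close> is again \<open>G s0\<close>, which provides the right angles.\<close>
lemma CAT0_foot_path_quasi_geodesic:
  fixes p :: "'a::metric_space"
  assumes cat: "CAT0 TYPE('a)" and G: "geodesic_between G w q"
    and s0: "s0 \<in> {0..dist w q}" and foot: "\<forall>s\<in>{0..dist w q}. dist p (G s0) \<le> dist p (G s)"
  obtains \<beta> T where "0 \<le> T" "quasi_geodesic_on 32 0 {0..T} \<beta>" "\<beta> 0 = p" "\<beta> T = q"
    "G s0 \<in> \<beta> ` {0..T}"
proof -
  define l \<rho> where "l = dist w q" and "\<rho> = dist p (G s0)"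
  obtain c where c: "geodesic_between c p (G s0)" using CAT0_geodesic_exists[OF cat] by metis
  have iso_c: "\<forall>s\<in>{0..\<rho>}. \<forall>t\<in>{0..\<rho>}. dist (c s) (c t) = \<bar>s - t\<bar>"
    using geodesic_between_isometric[OF c] by (simp add: \<rho>_def)
  have iso_G: "\<forall>s\<in>{0..l}. \<forall>t\<in>{0..l}. dist (G s) (G t) = \<bar>s - t\<bar>"
    using geodesic_between_isometric[OF G] by (simp add: l_def)
  have c0: "c 0 = p" and c\<rho>: "c \<rho> = G s0" using c by (auto simp: geodesic_between_def \<rho>_def)
  have angle: "(\<rho> - \<sigma>)\<^sup>2 + (s1 - s0)\<^sup>2 \<le> (dist (c \<sigma>) (G s1))\<^sup>2"
    if \<sigma>: "0 \<le> \<sigma>" "\<sigma> \<le> \<rho>" and s1: "s0 \<le> s1" "s1 \<le> l" for \<sigma> s1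
  proof -
    have "0 \<le> \<rho>" by (simp add: \<rho>_def)
    then have "dist (c \<sigma>) (c \<rho>) = \<rho> - \<sigma>" "dist (c 0) (c \<sigma>) = \<sigma>" using iso_c \<sigma> by auto
    then have d: "dist (c \<sigma>) (G s0) = \<rho> - \<sigma>" "dist p (c \<sigma>) = \<sigma>" by (simp_all add: c0 c\<rho>)
    have "\<forall>z\<in>G ` {0..l}. dist p (G s0) \<le> dist p z" using foot by (simp add: l_def)
    moreover have "dist p (c \<sigma>) + dist (c \<sigma>) (G s0) = dist p (G s0)" using d by (simp add: \<rho>_def)
    ultimately have "\<forall>z\<in>G ` {0..l}. dist (c \<sigma>) (G s0) \<le> dist (c \<sigma>) z"
      by (rule nearest_point_of_point_between)
    then have "\<forall>s\<in>{0..l}. dist (c \<sigma>) (G s0) \<le> dist (c \<sigma>) (G s)" by simp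
    from CAT0_foot_right_angle[OF cat iso_G _ this, of s1]
    show ?thesis using s0 s1 d by (simp add: l_def)
  qed
  define T where "T = \<rho> + (l - s0)"
  define \<beta> where "\<beta> = (\<lambda>\<sigma>. if \<sigma> \<le> \<rho> then c \<sigma> else G (s0 + (\<sigma> - \<rho>)))"
  have "quasi_geodesic_on 2 0 {0..T} \<beta>"
    unfolding \<beta>_def T_def
    by (rule quasi_geodesic_concat_right_angle[OF iso_c iso_G _ _ _ c\<rho> angle])
       (use s0 in \<open>auto simp: \<rho>_def l_def\<close>)
  then have "quasi_geodesic_on 32 0 {0..T} \<beta>" by (rule quasi_geodesic_on_mono) auto
  moreover have "\<beta> T = q"
    using c\<rho> G s0 by (cases "l = s0") (auto simp: \<beta>_def T_def l_def geodesic_between_def)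
  moreover have "\<beta> 0 = p" using c0 by (simp add: \<beta>_def \<rho>_def)
  moreover have "G s0 \<in> \<beta> ` {0..T}"
    using c\<rho> s0 by (intro image_eqI[of _ _ \<rho>]) (auto simp: \<beta>_def T_def \<rho>_def l_def)
  moreover have "0 \<le> T" using s0 by (simp add: T_def \<rho>_def l_def)
  ultimately show ?thesis using that by blast
qed

lemma closed_geodesic_ray_image:
  fixes b :: "real \<Rightarrow> 'a::metric_space"
  assumes ray: "geodesic_ray b bp"
  shows "closed (b ` {0..})"
  unfolding closed_sequential_limits
proof (intro allI impI, elim conjE)
  fix x l assume x: "\<forall>n. x n \<in> b ` {0..}" and lim: "x \<longlonglongrightarrow> l"
  have "\<forall>n. \<exists>t. 0 \<le> t \<and> x n = b t" using x by auto
  then obtain r where r: "\<And>n. 0 \<le> r n \<and> x n = b (r n)" by metis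
  have dist_r: "dist (x m) (x n) = dist (r m) (r n)" for m n
    using r[of m] r[of n] ray by (simp add: geodesic_ray_def dist_real_def)
  have "Cauchy r" using LIMSEQ_imp_Cauchy[OF lim] unfolding Cauchy_def dist_r .
  then obtain r0 where r0: "r \<longlonglongrightarrow> r0" using Cauchy_convergent convergent_def by blast
  have "0 \<le> r0" by (rule LIMSEQ_le_const[OF r0]) (use r in blast)
  have "dist (x n) (b r0) = dist (r n) r0" for n
    using r[of n] \<open>0 \<le> r0\<close> ray by (simp add: geodesic_ray_def dist_real_def)
  moreover have "(\<lambda>n. dist (r n) r0) \<longlonglongrightarrow> 0" using r0 by (rule tendsto_dist_iff[THEN iffD1])
  ultimately have "(\<lambda>n. dist (x n) (b r0)) \<longlonglongrightarrow> 0" by simp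
  then have "x \<longlonglongrightarrow> b r0" by (rule tendsto_dist_iff[THEN iffD2])
  then have "l = b r0" using lim LIMSEQ_unique by blast
  then show "l \<in> b ` {0..}" using \<open>0 \<le> r0\<close> by auto
qed

lemma CAT0_dist_geodesic_point_le:
  fixes p q u :: "'a::metric_space"
  assumes cat: "CAT0 TYPE('a)" and c: "geodesic_between c p u"
    and "0 < dist p q" "dist p q < dist p u" and short: "dist u q \<le> dist p u + 7/8 * dist p q"
  shows "dist q (c (dist p q)) \<le> 31/16 * dist p q"
proof -
  define h L where "h = dist p u" and "L = dist p q"
  have "0 < L" "L < h" using assms by (simp_all add: h_def L_def)
  have "(dist q u)\<^sup>2 \<le> (h + 7/8 * L)\<^sup>2"
    using short by (intro power_mono) (auto simp: h_def L_def dist_commute)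
  then have "(L/h) * (dist q u)\<^sup>2 \<le> (L/h) * (h + 7/8 * L)\<^sup>2"
    using \<open>0 < L\<close> \<open>L < h\<close> by (intro mult_left_mono) auto
  moreover have "(dist q (c L))\<^sup>2 \<le> (1 - L/h) * L\<^sup>2 + (L/h) * (dist q u)\<^sup>2 - (L/h) * (1 - L/h) * h\<^sup>2"
    using CAT0_CN_inequality[OF cat c, of L q] \<open>0 < L\<close> \<open>L < h\<close>
    by (simp add: h_def L_def dist_commute)
  ultimately have "(dist q (c L))\<^sup>2 \<le> (1 - L/h) * L\<^sup>2 + (L/h) * (h + 7/8 * L)\<^sup>2 - (L/h) * (1 - L/h) * h\<^sup>2"
    by linarith
  also have "\<dots> = 15/4 * L\<^sup>2 - 15/64 * (L / h * L\<^sup>2)"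
    using \<open>L < h\<close> \<open>0 < L\<close> by (simp add: field_simps power2_eq_square)
  also have "\<dots> \<le> (31/16 * L)\<^sup>2"
  proof -
    have "0 \<le> L / h * L\<^sup>2" using \<open>L < h\<close> \<open>0 < L\<close> by simp
    moreover have "(31/16 * L)\<^sup>2 = 961/256 * L\<^sup>2" by (simp add: power2_eq_square)
    ultimately show ?thesis using zero_le_power2[of L] by linarith
  qed
  finally have "dist q (c L) \<le> 31/16 * L" by (rule power2_le_imp_le) (use \<open>0 < L\<close> in simp)
  then show ?thesis by (simp add: L_def)
qed

text \<open>The point \<open>w\<close> lies on \<open>[p,u]\<close>, at distance \<open>min (d(u,p)) (d(p,q))\<close> from \<open>p\<close>; the last
  conclusion says that the Gromov product \<open>(w|q)\<^sub>p\<close> is at least \<open>d(p,q)/32\<close>.\<close>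
lemma CAT0_nearer_point_with_small_defect:
  fixes u p q :: "'a::metric_space"
  assumes cat: "CAT0 TYPE('a)" and near_u: "\<forall>z\<in>Z. dist u p \<le> dist u z"
    and L: "0 < dist p q" and short: "dist u q < dist u p + 7/8 * dist p q"
  obtains w where "\<forall>z\<in>Z. dist w p \<le> dist w z" "0 < dist w p" "dist w p \<le> dist u p"
    "dist w p \<le> dist p q" "dist w q \<le> dist w p + 15/16 * dist p q"
proof (cases "dist u p \<le> dist p q")
  case True
  have "u \<noteq> p" using short L by auto
  moreover have "dist u q \<le> dist u p + 15/16 * dist p q" using short L by linarith
  ultimately show ?thesis using True near_u by (intro that[of u]) auto
next
  case False
  define h L where "h = dist u p" and "L = dist p q"
  obtain c where c: "geodesic_between c p u" using CAT0_geodesic_exists[OF cat] by metis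
  have iso_c: "\<forall>s\<in>{0..h}. \<forall>t\<in>{0..h}. dist (c s) (c t) = \<bar>s - t\<bar>"
    using geodesic_between_isometric[OF c] by (simp add: h_def dist_commute)
  have c0: "c 0 = p" and ch: "c h = u" using c by (auto simp: geodesic_between_def h_def dist_commute)
  have "0 < L" "L < h" using False L by (auto simp: h_def L_def)
  then have "dist (c L) (c 0) = L" "dist (c L) (c h) = h - L" using iso_c by auto
  then have dist_w: "dist (c L) p = L" "dist (c L) u = h - L" by (simp_all add: c0 ch)
  have "\<forall>z\<in>Z. dist (c L) p \<le> dist (c L) z"
    using near_u by (rule nearest_point_of_point_between) (use dist_w in \<open>simp add: h_def dist_commute\<close>)
  moreover have "dist q (c L) \<le> 31/16 * L"
    unfolding L_def
  proof (rule CAT0_dist_geodesic_point_le[OF cat c L])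
    show "dist p q < dist p u" using \<open>L < h\<close> by (simp add: h_def L_def dist_commute)
    show "dist u q \<le> dist p u + 7/8 * dist p q" using short by (simp add: dist_commute)
  qed
  then have "dist (c L) q \<le> dist (c L) p + 15/16 * dist p q" using dist_w by (simp add: L_def dist_commute)
  ultimately show ?thesis
    using dist_w \<open>0 < L\<close> \<open>L < h\<close> by (intro that[of "c L"]) (auto simp: h_def L_def)
qed

lemma CAT0_detour_dichotomy:
  fixes x y p q :: "'a::metric_space"
  assumes cat: "CAT0 TYPE('a)" and xy: "dist x y \<le> dist x p" and L: "0 < dist p q"
  shows "dist x q < dist x p + 7/8 * dist p q \<or> dist y p < dist y q + 7/8 * dist p q"
proof (rule ccontr)
  define E L P where "E = dist y q" and "L = dist p q" and "P = dist y p"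
  assume "\<not> ?thesis"
  then have far_x: "dist x p + 7/8 * L \<le> dist x q" and far_y: "E + 7/8 * L \<le> P"
    by (auto simp: E_def L_def P_def)
  have "0 \<le> E" "E < P" using far_y L zero_le_dist[of y q] unfolding E_def L_def P_def by linarith+
  obtain g where g: "geodesic_between g y p" using CAT0_geodesic_exists[OF cat] by metis
  have "dist x (g E) \<le> dist x p"
    using CAT0_dist_geodesic_le_max[OF cat g, of E x] \<open>0 \<le> E\<close> \<open>E < P\<close> xy by (simp add: P_def)
  moreover have "dist q (g E) \<le> L / 2"
  proof -
    have "(dist q (g E))\<^sup>2 \<le> (1 - E/P) * E\<^sup>2 + (E/P) * L\<^sup>2 - (E/P) * (1 - E/P) * P\<^sup>2"
      using CAT0_CN_inequality[OF cat g, of E q] \<open>0 \<le> E\<close> \<open>E < P\<close>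
      by (simp add: E_def L_def P_def dist_commute)
    also have "\<dots> = E / P * (L\<^sup>2 - (P - E)\<^sup>2)"
      using \<open>E < P\<close> \<open>0 \<le> E\<close> by (simp add: field_simps power2_eq_square)
    also have "\<dots> \<le> E / P * (15/64 * L\<^sup>2)"
    proof (rule mult_left_mono)
      have "(7/8 * L)\<^sup>2 \<le> (P - E)\<^sup>2" using far_y L by (intro power_mono) (auto simp: L_def)
      then show "L\<^sup>2 - (P - E)\<^sup>2 \<le> 15/64 * L\<^sup>2" by (simp add: power2_eq_square)
    qed (use \<open>0 \<le> E\<close> \<open>E < P\<close> in simp)
    also have "\<dots> \<le> 15/64 * L\<^sup>2"
      using \<open>0 \<le> E\<close> \<open>E < P\<close> by (intro mult_left_le_one_le) auto
    also have "\<dots> \<le> (L / 2)\<^sup>2" by (simp add: power2_eq_square)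
    finally show ?thesis by (rule power2_le_imp_le) (use L in \<open>simp add: L_def\<close>)
  qed
  ultimately have "dist x q \<le> dist x p + L / 2"
    using dist_triangle[of x q "g E"] by (simp add: dist_commute)
  then show False using far_x L by (simp add: L_def)
qed

context
  fixes b :: "real \<Rightarrow> 'a::metric_space" and bp :: 'a
  assumes cat: "CAT0 TYPE('a)" and ray: "geodesic_ray b bp"
begin

lemma ray_nearest_right_angle:
  assumes near: "\<forall>z\<in>b ` {0..}. dist w p \<le> dist w z" and "p \<in> b ` {0..}" "z \<in> b ` {0..}"
  shows "(dist w p)\<^sup>2 + (dist p z)\<^sup>2 \<le> (dist w z)\<^sup>2"
proof -
  obtain r0 r1 where r: "0 \<le> r0" "0 \<le> r1" "p = b r0" "z = b r1" using assms(2,3) by auto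
  have iso: "\<forall>s\<in>{0..}. \<forall>t\<in>{0..}. dist (b s) (b t) = \<bar>s - t\<bar>"
    using ray by (simp add: geodesic_ray_def)
  have "(dist w (b r0))\<^sup>2 + (r1 - r0)\<^sup>2 \<le> (dist w (b r1))\<^sup>2"
    by (rule CAT0_foot_right_angle[OF cat iso]) (use r near in auto)
  moreover have "dist p z = \<bar>r0 - r1\<bar>" using iso r by simp
  ultimately show ?thesis using r by (simp add: power2_commute)
qed

lemma ray_nearest_point_unique:
  assumes a: "a \<in> nearest_points y (b ` {0..})" and c: "c \<in> nearest_points y (b ` {0..})"
  shows "a = c"
proof -
  have "(dist y a)\<^sup>2 + (dist a c)\<^sup>2 \<le> (dist y c)\<^sup>2"
    using nearest_pointsD[OF a] nearest_pointsD(1)[OF c] by (intro ray_nearest_right_angle) auto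
  moreover have "dist y a = dist y c" using nearest_pointsD(2)[OF a] nearest_pointsD(2)[OF c] by simp
  ultimately show ?thesis by simp
qed

context
  fixes \<kappa> :: "real \<Rightarrow> real" and M :: real
  assumes sublinear: "sublinear_fn \<kappa>"
    and near: "\<And>\<beta> s t. s \<le> t \<Longrightarrow> quasi_geodesic_on 32 0 {s..t} \<beta> \<Longrightarrow>
           \<beta> s \<in> b ` {0..} \<Longrightarrow> \<beta> t \<in> b ` {0..} \<Longrightarrow>
           \<beta> ` {s..t} \<subseteq> kappa_nbhd \<kappa> bp (b ` {0..}) M"
begin

lemma nbhd_constant_nonneg: "0 \<le> M"
proof -
  have "quasi_geodesic_on 32 0 {0..0} (\<lambda>_. bp)"
    using is_interval_cc[of "0::real" 0] by (simp add: quasi_geodesic_on_def)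
  moreover have "bp \<in> b ` {0..}" using ray by (force simp: geodesic_ray_def)
  ultimately have "bp \<in> kappa_nbhd \<kappa> bp (b ` {0..}) M" using near[of 0 0] by auto
  then have "0 \<le> M * \<kappa> 0" by (auto simp: kappa_nbhd_def intro: order_trans[OF infdist_nonneg])
  moreover have "1 \<le> \<kappa> 0" using sublinear by (simp add: sublinear_fn_def)
  ultimately show ?thesis by (simp add: zero_le_mult_iff)
qed

lemma nbhd_radius_nonneg: "0 \<le> M * \<kappa> (dist bp x)"
proof -
  have "1 \<le> \<kappa> (dist bp x)" using sublinear by (simp add: sublinear_fn_def)
  then show ?thesis using nbhd_constant_nonneg by simp
qed

lemma nbhd_radius_rescale:
  assumes "dist bp x' \<le> 6 * dist bp x"
  shows "3072 * (M * \<kappa> (dist bp x')) \<le> 18432 * M * \<kappa> (dist bp x)"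
proof -
  have "\<kappa> (dist bp x') \<le> 6 * \<kappa> (dist bp x)"
    using sublinear_fn_le_scale[OF sublinear _ _ _ assms] by simp
  then have "M * \<kappa> (dist bp x') \<le> M * (6 * \<kappa> (dist bp x))"
    using nbhd_constant_nonneg by (rule mult_left_mono)
  then show ?thesis by linarith
qed

text \<open>The witness \<open>x'\<close> is the foot of \<open>p\<close> on a geodesic \<open>[w,q]\<close>: it lies on a quasi-geodesic
  from \<open>p\<close> to \<open>q\<close> and is therefore close to the ray, while the right angles at \<open>p\<close> and at \<open>x'\<close>
  keep it away from the ray.\<close>
lemma gromov_product_bound:
  assumes p: "p \<in> b ` {0..}" and q: "q \<in> b ` {0..}"
    and near_w: "\<forall>z\<in>b ` {0..}. dist w p \<le> dist w z"
    and \<rho>: "0 \<le> \<rho>" "2 * \<rho> \<le> dist w p + dist p q - dist w q"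
  obtains x' where "dist bp x' \<le> dist bp p + dist w p" "\<rho>\<^sup>2 \<le> 3 * dist w p * (M * \<kappa> (dist bp x'))"
proof -
  obtain G where G: "geodesic_between G w q" using CAT0_geodesic_exists[OF cat] by metis
  have iso_G: "\<forall>s\<in>{0..dist w q}. \<forall>t\<in>{0..dist w q}. dist (G s) (G t) = \<bar>s - t\<bar>"
    by (rule geodesic_between_isometric[OF G])
  obtain s0 where s0: "s0 \<in> {0..dist w q}" and foot: "\<forall>s\<in>{0..dist w q}. dist p (G s0) \<le> dist p (G s)"
    using geodesic_foot_exists[OF G] by metis
  define x' where "x' = G s0"
  have "G 0 = w" "G (dist w q) = q" using G by (auto simp: geodesic_between_def)
  moreover have "dist (G 0) (G s0) = s0" "dist (G s0) (G (dist w q)) = dist w q - s0"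
    using iso_G s0 by auto
  ultimately have dist_x': "dist w x' = s0" "dist x' q = dist w q - s0" by (simp_all add: x'_def)
  obtain \<beta> T where "0 \<le> T" "quasi_geodesic_on 32 0 {0..T} \<beta>" "\<beta> 0 = p" "\<beta> T = q" "x' \<in> \<beta> ` {0..T}"
    using CAT0_foot_path_quasi_geodesic[OF cat G s0 foot] unfolding x'_def by metis
  then have "x' \<in> kappa_nbhd \<kappa> bp (b ` {0..}) M" using near[of 0 T] p q by auto
  then have close: "infdist x' (b ` {0..}) \<le> M * \<kappa> (dist bp x')" by (simp add: kappa_nbhd_def)
  have pyth: "(dist p x')\<^sup>2 + (dist w x')\<^sup>2 \<le> (dist w p)\<^sup>2"
    using CAT0_foot_right_angle[OF cat iso_G _ foot, of 0] s0 \<open>G 0 = w\<close> dist_x'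
    by (simp add: x'_def dist_commute)
  have "(dist p x')\<^sup>2 \<le> 3 * dist w p * infdist x' (b ` {0..})"
    using sq_dist_le_of_obtuse_angles[OF pyth ray_nearest_right_angle[OF near_w p]]
    by (intro le_mult_infdist) auto
  also have "\<dots> \<le> 3 * dist w p * (M * \<kappa> (dist bp x'))" using close by (simp add: mult_left_mono)
  finally have far: "(dist p x')\<^sup>2 \<le> 3 * dist w p * (M * \<kappa> (dist bp x'))" .
  have "\<rho> \<le> dist p x'"
    using \<rho> dist_x' dist_triangle[of w p x'] dist_triangle[of p q x'] by (simp add: dist_commute)
  then have "\<rho>\<^sup>2 \<le> (dist p x')\<^sup>2" using \<rho> by (intro power_mono) auto
  moreover have "(dist p x')\<^sup>2 \<le> (dist w p)\<^sup>2" using pyth zero_le_power2[of "dist w x'"] by linarith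
  then have "dist p x' \<le> dist w p" by (rule power2_le_imp_le) simp
  then have "dist bp x' \<le> dist bp p + dist w p" using dist_triangle[of bp x' p] by simp
  ultimately show ?thesis using that far by auto
qed

lemma short_side_bound:
  assumes p: "p \<in> b ` {0..}" and q: "q \<in> b ` {0..}"
    and near_u: "\<forall>z\<in>b ` {0..}. dist u p \<le> dist u z"
    and L: "0 < dist p q" and short: "dist u q < dist u p + 7/8 * dist p q"
  obtains x' where "dist bp x' \<le> dist bp p + dist u p" "dist p q \<le> 3072 * (M * \<kappa> (dist bp x'))"
proof -
  obtain w where near_w: "\<forall>z\<in>b ` {0..}. dist w p \<le> dist w z" and w: "0 < dist w p"
    "dist w p \<le> dist u p" "dist w p \<le> dist p q" "dist w q \<le> dist w p + 15/16 * dist p q"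
    using CAT0_nearer_point_with_small_defect[OF cat near_u L short] by metis
  obtain x' where x': "dist bp x' \<le> dist bp p + dist w p"
    and bound: "(dist p q / 32)\<^sup>2 \<le> 3 * dist w p * (M * \<kappa> (dist bp x'))"
    using gromov_product_bound[OF p q near_w, of "dist p q / 32"] w(4) L by auto
  have "3 * dist w p * (M * \<kappa> (dist bp x')) \<le> 3 * dist p q * (M * \<kappa> (dist bp x'))"
    using w(3) nbhd_radius_nonneg by (intro mult_right_mono) auto
  with bound have "dist p q * dist p q \<le> dist p q * (3072 * (M * \<kappa> (dist bp x')))"
    by (simp add: power2_eq_square field_simps)
  then have "dist p q \<le> 3072 * (M * \<kappa> (dist bp x'))" using L by simp
  moreover have "dist bp x' \<le> dist bp p + dist u p" using x' w(2) by linarith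
  ultimately show ?thesis using that by blast
qed

lemma nearest_points_dist_le:
  assumes xy: "dist x y \<le> infdist x (b ` {0..})"
    and p: "p \<in> nearest_points x (b ` {0..})" and q: "q \<in> nearest_points y (b ` {0..})"
  shows "dist p q \<le> 18432 * M * \<kappa> (dist bp x)"
proof (cases "p = q")
  case True
  then show ?thesis using nbhd_radius_nonneg by simp
next
  case False
  then have L: "0 < dist p q" by simp
  define D E where "D = dist x p" and "E = dist y q"
  note p' = nearest_pointsD[OF p] and q' = nearest_pointsD[OF q]
  have "bp \<in> b ` {0..}" using ray by (force simp: geodesic_ray_def)
  then have "D \<le> dist bp x" using p'(2) infdist_le[of bp _ x] by (simp add: D_def dist_commute)
  have "dist x y \<le> D" "0 \<le> D" using xy p'(2) by (simp_all add: D_def infdist_nonneg)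
  have "dist x q < D + 7/8 * dist p q \<or> dist y p < E + 7/8 * dist p q"
    using CAT0_detour_dichotomy[OF cat _ L, of x y] \<open>dist x y \<le> D\<close> by (simp add: D_def E_def)
  then show ?thesis
  proof
    assume "dist x q < D + 7/8 * dist p q"
    then obtain x' where x': "dist bp x' \<le> dist bp p + D"
      and bound: "dist p q \<le> 3072 * (M * \<kappa> (dist bp x'))"
      using short_side_bound[OF p'(1) q'(1) p'(3) L] by (metis D_def)
    have "dist bp p \<le> dist bp x + D" using dist_triangle[of bp p x] by (simp add: D_def)
    then have "dist bp x' \<le> 6 * dist bp x" using x' \<open>D \<le> dist bp x\<close> \<open>0 \<le> D\<close> by linarith
    then show ?thesis using nbhd_radius_rescale bound by (meson order_trans)
  next
    assume "dist y p < E + 7/8 * dist p q"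
    then obtain x' where x': "dist bp x' \<le> dist bp q + E"
      and bound: "dist p q \<le> 3072 * (M * \<kappa> (dist bp x'))"
      using short_side_bound[OF q'(1) p'(1) q'(3)] L by (metis E_def dist_commute)
    have "dist bp q \<le> dist bp x + D + E"
      using dist_triangle[of bp q y] dist_triangle[of bp y x] \<open>dist x y \<le> D\<close> by (simp add: E_def)
    moreover have "E \<le> dist y p" using q'(3) p'(1) unfolding E_def by blast
    moreover have "dist y p \<le> dist x y + D" using dist_triangle[of y p x] by (simp add: D_def dist_commute)
    ultimately have "dist bp x' \<le> 6 * dist bp x"
      using x' \<open>dist x y \<le> D\<close> \<open>D \<le> dist bp x\<close> \<open>0 \<le> D\<close> by linarith
    then show ?thesis using nbhd_radius_rescale bound by (meson order_trans)
  qed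
qed

lemma nearest_points_Un_dist_le:
  assumes xy: "dist x y \<le> infdist x (b ` {0..})"
    and "a \<in> nearest_points x (b ` {0..}) \<union> nearest_points y (b ` {0..})"
    and "c \<in> nearest_points x (b ` {0..}) \<union> nearest_points y (b ` {0..})"
  shows "dist a c \<le> 18432 * M * \<kappa> (dist bp x)"
proof -
  have xx: "dist x x \<le> infdist x (b ` {0..})" by (simp add: infdist_nonneg)
  have from_x: "dist a' c' \<le> 18432 * M * \<kappa> (dist bp x)"
    if "a' \<in> nearest_points x (b ` {0..})"
      "c' \<in> nearest_points x (b ` {0..}) \<union> nearest_points y (b ` {0..})" for a' c'
    using that nearest_points_dist_le[OF xx] nearest_points_dist_le[OF xy] by blast
  consider "a \<in> nearest_points x (b ` {0..})" | "c \<in> nearest_points x (b ` {0..})"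
    | "a \<in> nearest_points y (b ` {0..})" "c \<in> nearest_points y (b ` {0..})"
    using assms(2,3) by blast
  then show ?thesis
  proof cases
    case 1
    then show ?thesis using from_x assms(3) by blast
  next
    case 2
    then show ?thesis using from_x[of c a] assms(2) by (simp add: dist_commute)
  next
    case 3
    then show ?thesis using ray_nearest_point_unique[OF 3] nbhd_radius_nonneg by simp
  qed
qed

end

end

theorem theorem3p9:
  fixes b :: "real \<Rightarrow> 'a::metric_space" and bp :: 'a and \<kappa> :: "real \<Rightarrow> real" and M :: real
  assumes "proper_metric TYPE('a)"
    and "CAT0 TYPE('a)"
    and "sublinear_fn \<kappa>"
    and "geodesic_ray b bp"
    and "\<And>\<beta> s t. s \<le> t \<Longrightarrow> quasi_geodesic_on 32 0 {s..t} \<beta> \<Longrightarrow>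
           \<beta> s \<in> b ` {0..} \<Longrightarrow> \<beta> t \<in> b ` {0..} \<Longrightarrow>
           \<beta> ` {s..t} \<subseteq> kappa_nbhd \<kappa> bp (b ` {0..}) M"
  shows "kappa_contracting \<kappa> bp (b ` {0..}) (82000 * M)"
  unfolding kappa_contracting_def
proof (intro conjI allI impI)
  show "closed (b ` {0..})" by (rule closed_geodesic_ray_image[OF assms(4)])
  fix x y assume xy: "dist x y \<le> infdist x (b ` {0..})"
  have radius: "0 \<le> M * \<kappa> (dist bp x)" by (rule nbhd_radius_nonneg[OF assms(2,4,3,5)])
  have "diameter (nearest_points x (b ` {0..}) \<union> nearest_points y (b ` {0..}))
          \<le> 18432 * M * \<kappa> (dist bp x)"
    using nearest_points_Un_dist_le[OF assms(2,4,3,5) xy] radius by (intro diameter_le_dist_bound) auto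
  also have "\<dots> \<le> 82000 * M * \<kappa> (dist bp x)" using radius by (simp add: mult.assoc)
  finally show "diameter (nearest_points x (b ` {0..}) \<union> nearest_points y (b ` {0..}))
                  \<le> 82000 * M * \<kappa> (dist bp x)" .
qed

end
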